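(* Fix $r\ge5$. For every integer $k\ge1$ such that $k-1$ is divisible by $\binom r2-1$, setting $q=\frac{k-1}{\binom r2-1}$, the number $b(k)$ of (labelled) balanced $k$-TWGs for a given edge $e$ with vertex set equal to a given set of size $(r-2)k+2$ containing the endpoints of $e$ satisfies \[ b(k)=\frac{((r-2)k)!}{(r-2)!}\left(\frac{t(q)}{((r-2)q)!}\right)^{\binom r2-1}, \] where $t(q)$ denotes the number of (labelled) $q$-TWGs for a given edge on a given vertex set of size $(r-2)q+2$.
   Context: Tree witness graphs (TWGs) are defined recursively: a graph $T$ is a TWG for the edge $e$ if either $T=e$ (the single edge with its two endpoints), or there is a copy $H$ of $K_r$ with $e\in E(H)$ and, for each $f\in E(H)\setminus\{e\}$, a TWG $T_f$ for $f$, such that $T_f$ and $T_{f'}$ are vertex disjoint outside $V(H)$ for all $f\ne f'$, and $T=\bigcup_{f\in E(H)\setminus\{e\}}T_f$ ($H$ is the root and the $\binom r2-1$ graphs $T_f$ are the primal branches). The order $\vartheta(T)$ is $0$ if $T$ is a single edge and otherwise $1+\sum_f\vartheta(T_f)$; a $k$-TWG is a TWG of order $k$. A TWG (of order $\ge1$) is balanced if all its primal branches have the same order (the primal branches themselves need not be balanced). *)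

theory Defs
  imports Complex_Main
begin

text \<open>Graphs are pairs (vertex set, edge set); an edge is a 2-element vertex set.\<close>

definition edges_of :: "'a set \<Rightarrow> 'a set set" where
  "edges_of K = {f. f \<subseteq> K \<and> card f = 2}"

inductive twg :: "nat \<Rightarrow> 'a set \<Rightarrow> ('a set \<times> 'a set set) \<Rightarrow> nat \<Rightarrow> bool" for r where
  base: "card e = 2 \<Longrightarrow> twg r e (e, {e}) 0"
| step: "\<lbrakk> finite K; card K = r; e \<subseteq> K; card e = 2;
          \<forall>f \<in> edges_of K - {e}. twg r f (Tg f) (ord f);
          \<forall>f \<in> edges_of K - {e}. \<forall>f' \<in> edges_of K - {e}. f \<noteq> f' \<longrightarrow>
              fst (Tg f) \<inter> fst (Tg f') \<subseteq> K \<rbrakk>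
        \<Longrightarrow> twg r e ((\<Union>f \<in> edges_of K - {e}. fst (Tg f)), (\<Union>f \<in> edges_of K - {e}. snd (Tg f)))
                 (1 + (\<Sum>f \<in> edges_of K - {e}. ord f))"

definition btwg :: "nat \<Rightarrow> 'a set \<Rightarrow> ('a set \<times> 'a set set) \<Rightarrow> nat \<Rightarrow> bool" where
  "btwg r e T k \<longleftrightarrow> (\<exists>K Tg j. finite K \<and> card K = r \<and> e \<subseteq> K \<and> card e = 2 \<and>
      (\<forall>f \<in> edges_of K - {e}. twg r f (Tg f) j) \<and>
      (\<forall>f \<in> edges_of K - {e}. \<forall>f' \<in> edges_of K - {e}. f \<noteq> f' \<longrightarrow>
              fst (Tg f) \<inter> fst (Tg f') \<subseteq> K) \<and>
      T = ((\<Union>f \<in> edges_of K - {e}. fst (Tg f)), (\<Union>f \<in> edges_of K - {e}. snd (Tg f))) \<and>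
      k = 1 + (\<Sum>f \<in> edges_of K - {e}. j))"

end

theory Submission
  imports Defs "HOL-Library.FuncSet"
begin

text \<open>A balanced \<open>k\<close>-TWG for \<open>e\<close> consists of a root clique \<open>K \<supseteq> e\<close> and, for each of the
  \<open>m = (r choose 2) - 1\<close> edges \<open>h \<noteq> e\<close> of \<open>K\<close>, a \<open>q\<close>-TWG for \<open>h\<close>. As \<open>(r - 2) k + 2\<close> is the
  largest possible number of vertices, on such a vertex set \<open>V\<close> the branches meet \<open>K\<close> only in
  their root edges and each other only inside \<open>K\<close>, so their private vertices partition
  \<open>V - K\<close> into blocks of size \<open>s = (r - 2) q\<close>; conversely every such choice glues to a
  balanced TWG on \<open>V\<close>. The gluing is injective for \<open>r \<ge> 5\<close>: the edges of all cliques used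
  form the least set containing the edges of the TWG that is closed under completing a \<open>K_r\<close>
  with one missing edge, so they are determined by the TWG, and a clique edge at a vertex
  outside \<open>K\<close> never leaves its branch. Counting the choices gives
  \<open>((r - 2) k choose (r - 2)) \<cdot> (m s)! / (s!)^m \<cdot> t(q)^m\<close>.\<close>

section \<open>Edges of a vertex set\<close>

lemma mem_edges_of: "f \<in> edges_of K \<longleftrightarrow> f \<subseteq> K \<and> card f = 2"
  by (simp add: edges_of_def)

lemma finite_edges_of: "finite K \<Longrightarrow> finite (edges_of K)"
  unfolding edges_of_def by (rule finite_subset[of _ "Pow K"]) auto

lemma card_edges_of: "finite K \<Longrightarrow> card (edges_of K) = card K choose 2"
  unfolding edges_of_def using n_subsets by blast

lemma card_edges_of_Diff:
  "finite K \<Longrightarrow> e \<in> edges_of K \<Longrightarrow> card (edges_of K - {e}) = (card K choose 2) - 1"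
  by (simp add: card_edges_of finite_edges_of)

lemma edges_of_mono: "A \<subseteq> B \<Longrightarrow> edges_of A \<subseteq> edges_of B"
  unfolding edges_of_def by blast

lemma subset_edges_ofD: "C \<subseteq> edges_of A \<Longrightarrow> c \<in> C \<Longrightarrow> c \<subseteq> A"
  unfolding edges_of_def by blast

lemma doubleton_in_edges_of: "x \<in> K \<Longrightarrow> y \<in> K \<Longrightarrow> x \<noteq> y \<Longrightarrow> {x, y} \<in> edges_of K"
  by (simp add: mem_edges_of)

lemma card2_subset_eq: "c \<subseteq> h \<Longrightarrow> card c = 2 \<Longrightarrow> card h = 2 \<Longrightarrow> c = h"
  by (metis card.infinite card_subset_eq zero_neq_numeral)

lemma le_choose_two:
  assumes "3 \<le> n" shows "n \<le> n choose 2"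
proof -
  have "n * 2 \<le> n * (n - 1)" using assms by (intro mult_le_mono2) simp
  then show ?thesis unfolding choose_two using div_le_mono[of "n * 2" _ 2] by simp
qed

lemma Union_edges_of_Diff:
  assumes "3 \<le> card K" and "e \<in> edges_of K"
  shows "\<Union>(edges_of K - {e}) = K"
proof
  show "\<Union>(edges_of K - {e}) \<subseteq> K" by (auto simp: mem_edges_of)
  show "K \<subseteq> \<Union>(edges_of K - {e})"
  proof
    fix x assume x: "x \<in> K"
    obtain a b where e: "e = {a, b}" "a \<noteq> b" "a \<in> K" "b \<in> K"
      using assms(2) by (auto simp: mem_edges_of card_2_iff)
    show "x \<in> \<Union>(edges_of K - {e})"
    proof (cases "x \<in> e")
      case True
      have "finite K" using assms(1) card.infinite by fastforce
      then have "card (K - e) \<noteq> 0" using assms e by (simp add: card_Diff_subset)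
      then obtain y where y: "y \<in> K" "y \<notin> e" by (metis Diff_iff all_not_in_conv card.empty)
      then have "{x, y} \<in> edges_of K - {e}" using x True by (auto intro: doubleton_in_edges_of)
      then show ?thesis by blast
    next
      case False
      then have "{x, a} \<in> edges_of K - {e}" using x e by (auto intro: doubleton_in_edges_of)
      then show ?thesis by blast
    qed
  qed
qed

lemma edges_of_image:
  assumes "inj_on \<pi> K"
  shows "edges_of (\<pi> ` K) = image \<pi> ` edges_of K"
proof
  show "edges_of (\<pi> ` K) \<subseteq> image \<pi> ` edges_of K"
  proof
    fix c assume "c \<in> edges_of (\<pi> ` K)"
    then have c: "c \<subseteq> \<pi> ` K" "card c = 2" by (auto simp: mem_edges_of)
    define d where "d = K \<inter> \<pi> -` c"
    have d: "d \<subseteq> K" "\<pi> ` d = c" unfolding d_def using c(1) by blast+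
    then have "card d = card c" using card_image[OF inj_on_subset[OF assms d(1)]] by simp
    then have "d \<in> edges_of K" using d(1) c(2) by (simp add: mem_edges_of)
    then show "c \<in> image \<pi> ` edges_of K" using d(2) by blast
  qed
  show "image \<pi> ` edges_of K \<subseteq> edges_of (\<pi> ` K)"
    using assms by (auto simp: mem_edges_of card_image inj_on_subset image_mono)
qed

section \<open>Vertex counts of TWGs\<close>

lemma card_UN_meeting_in:
  assumes "finite K" and "finite E" and "\<forall>f\<in>E. finite (Vs f)" and "K \<subseteq> (\<Union>f\<in>E. Vs f)"
    and "\<forall>f\<in>E. \<forall>f'\<in>E. f \<noteq> f' \<longrightarrow> Vs f \<inter> Vs f' \<subseteq> K"
  shows "card (\<Union>f\<in>E. Vs f) = card K + (\<Sum>f\<in>E. card (Vs f - K))"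
proof -
  have "(\<Union>f\<in>E. Vs f) = K \<union> (\<Union>f\<in>E. Vs f - K)" using assms(4) by blast
  also have "card \<dots> = card K + card (\<Union>f\<in>E. Vs f - K)"
    using assms(1-3) by (intro card_Un_disjoint) blast+
  also have "card (\<Union>f\<in>E. Vs f - K) = (\<Sum>f\<in>E. card (Vs f - K))"
  proof (rule card_UN_disjoint)
    show "\<forall>f\<in>E. \<forall>f'\<in>E. f \<noteq> f' \<longrightarrow> (Vs f - K) \<inter> (Vs f' - K) = {}" using assms(5) by blast
  qed (use assms(2,3) in auto)
  finally show ?thesis .
qed

lemma card_branch_meeting_root:
  assumes "finite A" and "finite K" and "f \<subseteq> A \<inter> K" and "card f = 2"
  shows "card A = card (A - K) + card (A \<inter> K)" and "2 \<le> card (A \<inter> K)"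
    and "card (A \<inter> K) = 2 \<Longrightarrow> A \<inter> K = f"
proof -
  show "card A = card (A - K) + card (A \<inter> K)" using card_Int_Diff[OF assms(1), of K] by simp
  show "2 \<le> card (A \<inter> K)" using card_mono[OF _ assms(3)] assms(2,4) by simp
  show "A \<inter> K = f" if "card (A \<inter> K) = 2"
    using card2_subset_eq[OF assms(3,4) that] by simp
qed

lemma card_glued_branches:
  fixes Vs :: "'a set \<Rightarrow> 'a set" and ord :: "'a set \<Rightarrow> nat"
  assumes K: "finite K" "card K = r" "3 \<le> r" "e \<in> edges_of K"
    and br: "\<forall>f\<in>edges_of K - {e}. finite (Vs f) \<and> f \<subseteq> Vs f \<and> card (Vs f) \<le> (r - 2) * ord f + 2"
    and disj: "\<forall>f\<in>edges_of K - {e}. \<forall>f'\<in>edges_of K - {e}. f \<noteq> f' \<longrightarrow> Vs f \<inter> Vs f' \<subseteq> K"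
  defines "E \<equiv> edges_of K - {e}"
  shows "card (\<Union>f\<in>E. Vs f) \<le> (r - 2) * (1 + (\<Sum>f\<in>E. ord f)) + 2"
    and "card (\<Union>f\<in>E. Vs f) = (r - 2) * (1 + (\<Sum>f\<in>E. ord f)) + 2 \<Longrightarrow>
         \<forall>f\<in>E. Vs f \<inter> K = f \<and> card (Vs f) = (r - 2) * ord f + 2"
proof -
  have br_E: "finite (Vs f)" "f \<subseteq> Vs f \<inter> K" "card f = 2" "card (Vs f) \<le> (r - 2) * ord f + 2"
    if "f \<in> E" for f
    using br that unfolding E_def by (auto simp: mem_edges_of)
  have meet: "card (Vs f) = card (Vs f - K) + card (Vs f \<inter> K)" "2 \<le> card (Vs f \<inter> K)"
    "card (Vs f \<inter> K) = 2 \<Longrightarrow> Vs f \<inter> K = f" if "f \<in> E" for f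
    using card_branch_meeting_root[OF br_E(1)[OF that] K(1) br_E(2,3)[OF that]] by blast+
  have "K = \<Union>E" unfolding E_def using Union_edges_of_Diff[OF _ K(4)] K(2,3) by simp
  then have "K \<subseteq> (\<Union>f\<in>E. Vs f)" using br_E(2) by blast
  then have card_U: "card (\<Union>f\<in>E. Vs f) = r + (\<Sum>f\<in>E. card (Vs f - K))"
    using card_UN_meeting_in[of K E Vs] K(1,2) br_E(1) disj finite_edges_of[OF K(1)]
    unfolding E_def by blast
  have private_le: "card (Vs f - K) \<le> (r - 2) * ord f" if "f \<in> E" for f
    using meet(1,2)[OF that] br_E(4)[OF that] by linarith
  have "(r - 2) * (1 + (\<Sum>f\<in>E. ord f)) + 2 = r + (r - 2) * (\<Sum>f\<in>E. ord f)"
    using K(3) by (simp add: distrib_left)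
  then have r_eq: "(r - 2) * (1 + (\<Sum>f\<in>E. ord f)) + 2 = r + (\<Sum>f\<in>E. (r - 2) * ord f)"
    by (simp add: sum_distrib_left)
  show "card (\<Union>f\<in>E. Vs f) \<le> (r - 2) * (1 + (\<Sum>f\<in>E. ord f)) + 2"
    unfolding card_U r_eq using private_le by (simp add: sum_mono)
  assume "card (\<Union>f\<in>E. Vs f) = (r - 2) * (1 + (\<Sum>f\<in>E. ord f)) + 2"
  then have sum_eq: "(\<Sum>f\<in>E. card (Vs f - K)) = (\<Sum>f\<in>E. (r - 2) * ord f)"
    unfolding card_U r_eq by simp
  have "finite E" unfolding E_def using finite_edges_of[OF K(1)] by simp
  then have private_eq: "card (Vs f - K) = (r - 2) * ord f" if "f \<in> E" for f
    using sum_mono_inv[OF sum_eq private_le that] by blast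
  show "\<forall>f\<in>E. Vs f \<inter> K = f \<and> card (Vs f) = (r - 2) * ord f + 2"
  proof
    fix f assume f: "f \<in> E"
    then have "card (Vs f \<inter> K) = 2" using meet(1,2)[OF f] private_eq[OF f] br_E(4)[OF f] by linarith
    then show "Vs f \<inter> K = f \<and> card (Vs f) = (r - 2) * ord f + 2"
      using meet(1,3)[OF f] private_eq[OF f] by simp
  qed
qed

lemma twg_graph:
  assumes "twg r f T k" and "3 \<le> r"
  shows "finite (fst T)" and "f \<subseteq> fst T" and "snd T \<subseteq> edges_of (fst T)"
    and "card (fst T) \<le> (r - 2) * k + 2"
proof -
  have "finite (fst T) \<and> f \<subseteq> fst T \<and> snd T \<subseteq> edges_of (fst T) \<and> card (fst T) \<le> (r - 2) * k + 2"
    using assms(1)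
  proof (induction rule: twg.induct)
    case (base e)
    then show ?case by (auto simp: mem_edges_of intro: card_ge_0_finite)
  next
    case (step K e Tg ord)
    let ?E = "edges_of K - {e}"
    have e: "e \<in> edges_of K" using step.hyps(3,4) by (simp add: mem_edges_of)
    have IH: "finite (fst (Tg f))" "f \<subseteq> fst (Tg f)" "snd (Tg f) \<subseteq> edges_of (fst (Tg f))"
      "card (fst (Tg f)) \<le> (r - 2) * ord f + 2" if "f \<in> ?E" for f
      using step.IH that by blast+
    have "K = \<Union>?E" using Union_edges_of_Diff[OF _ e] step.hyps(2) assms(2) by simp
    then have "e \<subseteq> (\<Union>f\<in>?E. fst (Tg f))" using step.hyps(3) IH(2) by blast
    moreover have "(\<Union>f\<in>?E. snd (Tg f)) \<subseteq> edges_of (\<Union>f\<in>?E. fst (Tg f))"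
    proof
      fix c assume "c \<in> (\<Union>f\<in>?E. snd (Tg f))"
      then obtain f where "f \<in> ?E" "c \<in> edges_of (fst (Tg f))" using IH(3) by blast
      then show "c \<in> edges_of (\<Union>f\<in>?E. fst (Tg f))" by (auto simp: mem_edges_of)
    qed
    moreover have "card (\<Union>f\<in>?E. fst (Tg f)) \<le> (r - 2) * (1 + (\<Sum>f\<in>?E. ord f)) + 2"
      using card_glued_branches(1)[OF step.hyps(1,2) assms(2) e _ step.hyps(5)] IH(1,2,4) by blast
    moreover have "finite (\<Union>f\<in>?E. fst (Tg f))"
      using finite_edges_of[OF step.hyps(1)] IH(1) by blast
    ultimately show ?case by simp
  qed
  then show "finite (fst T)" and "f \<subseteq> fst T" and "snd T \<subseteq> edges_of (fst T)"
    and "card (fst T) \<le> (r - 2) * k + 2" by auto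
qed

lemma twg_in_Pow:
  assumes "twg r f T k" and "3 \<le> r"
  shows "T \<in> Pow (fst T) \<times> Pow (Pow (fst T))"
  using twg_graph(3)[OF assms] unfolding mem_Times_iff edges_of_def by blast

lemma finite_twgs_within:
  assumes "3 \<le> r" and "finite W"
  shows "finite {T. twg r f T k \<and> fst T \<subseteq> W}"
proof (rule finite_subset)
  show "{T. twg r f T k \<and> fst T \<subseteq> W} \<subseteq> Pow W \<times> Pow (Pow W)"
  proof
    fix T assume "T \<in> {T. twg r f T k \<and> fst T \<subseteq> W}"
    then have "twg r f T k" "fst T \<subseteq> W" by simp_all
    then have "T \<in> Pow (fst T) \<times> Pow (Pow (fst T))" "fst T \<subseteq> W" using twg_in_Pow[OF _ assms(1)]
      by simp_all
    then show "T \<in> Pow W \<times> Pow (Pow W)" unfolding mem_Times_iff by blast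
  qed
qed (use assms(2) in simp)

section \<open>Tight TWGs and their clique edges\<close>

text \<open>A TWG in which every primal branch meets its root clique only in its own edge (forced by
  \<open>(r - 2) k + 2\<close> vertices), together with the set \<open>C\<close> of the edges of all cliques used.\<close>

inductive tight_twg :: "nat \<Rightarrow> 'a set \<Rightarrow> ('a set \<times> 'a set set) \<Rightarrow> nat \<Rightarrow> 'a set set \<Rightarrow> bool"
  for r where
  base: "card e = 2 \<Longrightarrow> tight_twg r e (e, {e}) 0 {e}"
| step: "\<lbrakk> finite K; card K = r; e \<subseteq> K; card e = 2;
          \<forall>f \<in> edges_of K - {e}. tight_twg r f (Tg f) (ord f) (Cf f);
          \<forall>f \<in> edges_of K - {e}. fst (Tg f) \<inter> K = f;
          \<forall>f \<in> edges_of K - {e}. \<forall>f' \<in> edges_of K - {e}. f \<noteq> f' \<longrightarrow>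
              fst (Tg f) \<inter> fst (Tg f') \<subseteq> K \<rbrakk>
        \<Longrightarrow> tight_twg r e (\<Union>f \<in> edges_of K - {e}. fst (Tg f), \<Union>f \<in> edges_of K - {e}. snd (Tg f))
              (1 + (\<Sum>f \<in> edges_of K - {e}. ord f))
              (edges_of K \<union> (\<Union>f \<in> edges_of K - {e}. Cf f))"

lemma tight_twg_graph:
  assumes "tight_twg r f T k C" and "3 \<le> r"
  shows "twg r f T k" and "f \<in> C" and "snd T \<subseteq> C" and "C \<subseteq> edges_of (fst T)"
proof -
  have "twg r f T k \<and> f \<in> C \<and> snd T \<subseteq> C \<and> C \<subseteq> edges_of (fst T)"
    using assms(1)
  proof (induction rule: tight_twg.induct)
    case (base e)
    then show ?case by (simp add: twg.base mem_edges_of)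
  next
    case (step K e Tg ord Cf)
    let ?E = "edges_of K - {e}"
    let ?V = "\<Union>f\<in>?E. fst (Tg f)"
    have IH: "twg r f (Tg f) (ord f)" "f \<in> Cf f" "snd (Tg f) \<subseteq> Cf f"
      "Cf f \<subseteq> edges_of (fst (Tg f))" if "f \<in> ?E" for f
      using step.IH that by blast+
    have e: "e \<in> edges_of K" using step.hyps(3,4) by (simp add: mem_edges_of)
    have twg: "twg r e (?V, \<Union>f\<in>?E. snd (Tg f)) (1 + (\<Sum>f\<in>?E. ord f))"
      using step.hyps(1-4,6) IH(1) by (intro twg.step) blast+
    have "K \<subseteq> ?V"
      using Union_edges_of_Diff[OF _ e] step.hyps(2) assms(2) twg_graph(2)[OF IH(1) assms(2)]
        by blast
    then have "edges_of K \<subseteq> edges_of ?V" by (rule edges_of_mono)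
    moreover have "Cf f \<subseteq> edges_of ?V" if "f \<in> ?E" for f
      using IH(4)[OF that] edges_of_mono[of "fst (Tg f)" ?V] that by blast
    ultimately have "edges_of K \<union> (\<Union>f\<in>?E. Cf f) \<subseteq> edges_of ?V" by blast
    moreover have "(\<Union>f\<in>?E. snd (Tg f)) \<subseteq> (\<Union>f\<in>?E. Cf f)" using IH(3) by blast
    ultimately show ?case using twg e by (simp add: le_supI2)
  qed
  then show "twg r f T k" and "f \<in> C" and "snd T \<subseteq> C" and "C \<subseteq> edges_of (fst T)" by auto
qed

lemma twg_imp_tight_twg:
  assumes "twg r f T k" and "3 \<le> r" and "card (fst T) = (r - 2) * k + 2"
  shows "\<exists>C. tight_twg r f T k C"
  using assms(1,3)
proof (induction rule: twg.induct)
  case (base e)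
  then show ?case using tight_twg.base by blast
next
  case (step K e Tg ord)
  let ?E = "edges_of K - {e}"
  have e: "e \<in> edges_of K" using step.hyps(3,4) by (simp add: mem_edges_of)
  have twg_f: "twg r f (Tg f) (ord f)" if "f \<in> ?E" for f
    using step.IH that by blast
  have br: "\<forall>f\<in>?E. finite (fst (Tg f)) \<and> f \<subseteq> fst (Tg f) \<and> card (fst (Tg f)) \<le> (r - 2) * ord f + 2"
    using twg_graph(1,2,4)[OF twg_f assms(2)] by blast
  have tight: "\<forall>f\<in>?E. fst (Tg f) \<inter> K = f \<and> card (fst (Tg f)) = (r - 2) * ord f + 2"
    using card_glued_branches(2)[OF step.hyps(1,2) assms(2) e br step.hyps(5)] step.prems by simp
  then have "\<forall>f\<in>?E. \<exists>C. tight_twg r f (Tg f) (ord f) C" using step.IH by blast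
  then obtain Cf where "\<forall>f\<in>?E. tight_twg r f (Tg f) (ord f) (Cf f)" by (metis bchoice)
  moreover have "\<forall>f\<in>?E. fst (Tg f) \<inter> K = f" using tight by blast
  ultimately show ?case using tight_twg.step[OF step.hyps(1-4) _ _ step.hyps(5)] by blast
qed

definition clique_closed :: "nat \<Rightarrow> 'a set set \<Rightarrow> bool" where
  "clique_closed r D \<longleftrightarrow>
     (\<forall>X g. finite X \<longrightarrow> card X = r \<longrightarrow> g \<in> edges_of X \<longrightarrow> edges_of X - {g} \<subseteq> D \<longrightarrow> g \<in> D)"

lemma clique_closedD:
  "clique_closed r D \<Longrightarrow> finite X \<Longrightarrow> card X = r \<Longrightarrow> g \<in> edges_of X \<Longrightarrow> edges_of X - {g} \<subseteq> D
    \<Longrightarrow> g \<in> D"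
  unfolding clique_closed_def by blast

lemma clique_closed_singleton:
  assumes "3 \<le> r"
  shows "clique_closed r {e}"
  unfolding clique_closed_def
proof (intro allI impI)
  fix X g assume X: "finite X" "card X = r" and "g \<in> edges_of X" "edges_of X - {g} \<subseteq> {e}"
  have "3 \<le> card (edges_of X)" using X assms le_choose_two[of r] by (simp add: card_edges_of)
  moreover have "card (edges_of X) - card {g} \<le> card (edges_of X - {g})"
    by (rule diff_card_le_card_Diff) simp
  moreover have "card (edges_of X - {g}) \<le> card {e}"
    using \<open>edges_of X - {g} \<subseteq> {e}\<close> by (intro card_mono) auto
  ultimately show "g \<in> {e}" by simp
qed

text \<open>The top level of a tight TWG: root clique \<open>K\<close>, branch edges \<open>E\<close>, and for each branch
  its vertex set \<open>Vs h\<close> and the edges \<open>Cf h\<close> of its cliques.\<close>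

locale glued_branches =
  fixes K :: "'a set" and E :: "'a set set"
    and Vs :: "'a set \<Rightarrow> 'a set" and Cf :: "'a set \<Rightarrow> 'a set set"
  assumes branch_edges: "E \<subseteq> edges_of K"
    and branch_meets_root: "h \<in> E \<Longrightarrow> Vs h \<inter> K = h"
    and branch_edge_in_cliques: "h \<in> E \<Longrightarrow> h \<in> Cf h"
    and cliques_within_branch: "h \<in> E \<Longrightarrow> Cf h \<subseteq> edges_of (Vs h)"
    and branches_meet_in_root: "h \<in> E \<Longrightarrow> h' \<in> E \<Longrightarrow> h \<noteq> h' \<Longrightarrow> Vs h \<inter> Vs h' \<subseteq> K"
begin

abbreviation cliques :: "'a set set" where
  "cliques \<equiv> edges_of K \<union> (\<Union>h\<in>E. Cf h)"

lemma card_clique_edge: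
  assumes "c \<in> cliques"
  shows "card c = 2"
  using assms
proof
  assume "c \<in> (\<Union>h\<in>E. Cf h)"
  then obtain h where "h \<in> E" "c \<in> Cf h" by blast
  then have "c \<in> edges_of (Vs h)" using cliques_within_branch by blast
  then show ?thesis by (simp add: mem_edges_of)
qed (simp add: mem_edges_of)

lemma clique_edge_stays_in_branch:
  assumes "h \<in> E" and "x \<in> Vs h" and "x \<notin> K" and "{x, y} \<in> cliques"
  shows "y \<in> Vs h"
proof -
  have "{x, y} \<notin> edges_of K" using assms(3) by (simp add: mem_edges_of)
  then obtain h' where h': "h' \<in> E" "{x, y} \<in> Cf h'" using assms(4) by blast
  then have xy: "{x, y} \<subseteq> Vs h'" using subset_edges_ofD[OF cliques_within_branch[OF h'(1)]] by blast
  show ?thesis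
  proof (cases "h' = h")
    case False
    then have "x \<in> K" using branches_meet_in_root[OF assms(1) h'(1)] assms(2) xy by blast
    then show ?thesis using assms(3) by simp
  qed (use xy in simp)
qed

lemma clique_edge_in_branch_cliques:
  assumes "h \<in> E" and "c \<in> cliques" and "c \<subseteq> Vs h"
  shows "c \<in> Cf h"
proof -
  have h: "card h = 2" "h \<in> Cf h" using assms(1) branch_edges branch_edge_in_cliques
    by (auto simp: mem_edges_of)
  have c2: "card c = 2" using card_clique_edge[OF assms(2)] .
  have in_h: "c = h" if "c \<subseteq> K"
    using assms(3) that branch_meets_root[OF assms(1)] c2 h(1) by (intro card2_subset_eq) auto
  show ?thesis
  proof (cases "c \<in> edges_of K")
    case True
    then show ?thesis using in_h h(2) by (simp add: mem_edges_of)
  next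
    case False
    then obtain h' where h': "h' \<in> E" "c \<in> Cf h'" using assms(2) by blast
    show ?thesis
    proof (cases "h' = h")
      case False
      have "c \<subseteq> Vs h'" using subset_edges_ofD[OF cliques_within_branch[OF h'(1)] h'(2)] .
      then have "c \<subseteq> K" using branches_meet_in_root[OF assms(1) h'(1)] False assms(3) by blast
      then show ?thesis using in_h h(2) by simp
    qed (use h' in simp)
  qed
qed

lemma clique_leaving_branch:
  assumes "h \<in> E" and x: "x \<in> X" "x \<in> Vs h" "x \<notin> K" and y: "y \<in> X" "y \<notin> Vs h"
    and almost: "\<And>a b. a \<in> X \<Longrightarrow> b \<in> X \<Longrightarrow> a \<noteq> b \<Longrightarrow> {a, b} \<noteq> g \<Longrightarrow> {a, b} \<in> cliques"
  shows "X \<subseteq> {x, y} \<union> h"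
proof
  fix z assume z: "z \<in> X"
  have "x \<noteq> y" using x(2) y(2) by blast
  then have g: "g = {x, y}"
    using almost[OF x(1) y(1)] clique_edge_stays_in_branch[OF assms(1) x(2,3)] y(2) by blast
  show "z \<in> {x, y} \<union> h"
  proof (cases "z = x \<or> z = y")
    case False
    then have "{x, z} \<in> cliques" "{z, y} \<in> cliques"
      using almost[OF x(1) z] almost[OF z y(1)] g by (auto simp: doubleton_eq_iff)
    then have "z \<in> Vs h" "z \<in> K"
      using clique_edge_stays_in_branch[OF assms(1) x(2,3)]
        clique_edge_stays_in_branch[OF assms(1)] y(2)
      by blast+
    then show ?thesis using branch_meets_root[OF assms(1)] by blast
  qed blast
qed

lemma clique_closed_cliques:
  assumes "5 \<le> r" and closed: "\<And>h. h \<in> E \<Longrightarrow> clique_closed r (Cf h)"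
  shows "clique_closed r cliques"
  unfolding clique_closed_def
proof (intro allI impI)
  fix X g assume X: "finite X" "card X = r" "g \<in> edges_of X"
    and almost_X: "edges_of X - {g} \<subseteq> cliques"
  have almost: "{a, b} \<in> cliques" if "a \<in> X" "b \<in> X" "a \<noteq> b" "{a, b} \<noteq> g" for a b
    using almost_X doubleton_in_edges_of[OF that(1-3)] that(4) by blast
  have g: "g \<subseteq> X" "card g = 2" using X(3) by (auto simp: mem_edges_of)
  show "g \<in> cliques"
  proof (cases "X \<subseteq> K")
    case True
    then show ?thesis using g by (auto simp: mem_edges_of)
  next
    case False
    then obtain x where x: "x \<in> X" "x \<notin> K" by blast
    have "card (insert x g) \<le> 3" using g(2) card_insert_le_m1[of 3 g x] by simp
    then have "insert x g \<noteq> X" using X(2) assms(1) by (intro notI) simp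
    then obtain y0 where y0: "y0 \<in> X" "y0 \<notin> g" "y0 \<noteq> x" using x(1) g(1) by blast
    have "{x, y0} \<in> cliques" "{x, y0} \<notin> edges_of K"
      using almost[OF x(1) y0(1)] y0 x(2) by (auto simp: mem_edges_of)
    then obtain h where h: "h \<in> E" "{x, y0} \<in> Cf h" by blast
    then have xh: "x \<in> Vs h" using subset_edges_ofD[OF cliques_within_branch[OF h(1)]] by blast
    show ?thesis
    proof (cases "X \<subseteq> Vs h")
      case True
      have "edges_of X - {g} \<subseteq> Cf h"
      proof
        fix c assume c: "c \<in> edges_of X - {g}"
        then have "c \<subseteq> Vs h" using True by (auto simp: mem_edges_of)
        then show "c \<in> Cf h" using clique_edge_in_branch_cliques[OF h(1)] almost_X c by blast
      qed
      then show ?thesis using clique_closedD[OF closed[OF h(1)] X] h(1) by blast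
    next
      case False
      txt \<open>Then \<open>X\<close> has at most four vertices; this is where \<open>r \<ge> 5\<close> is needed.\<close>
      then obtain y where y: "y \<in> X" "y \<notin> Vs h" by blast
      have X_sub: "X \<subseteq> {x, y} \<union> h" by (rule clique_leaving_branch[OF h(1) x(1) xh x(2) y almost])
      have h2: "card h = 2" using h(1) branch_edges by (auto simp: mem_edges_of)
      then have "card X \<le> card ({x, y} \<union> h)"
        using h2 card.infinite[of h] by (intro card_mono[OF _ X_sub]) auto
      also have "\<dots> \<le> card {x, y} + card h" by (rule card_Un_le)
      also have "\<dots> \<le> 4" using h2 card_insert_le_m1[of 2 "{y}" x] by simp
      finally show ?thesis using X(2) assms(1) by simp
    qed
  qed
qed

end

lemma glued_branchesI:
  assumes "3 \<le> r"
    and "\<forall>f\<in>edges_of K - {e}. tight_twg r f (Tg f) (ord f) (Cf f)"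
    and "\<forall>f\<in>edges_of K - {e}. fst (Tg f) \<inter> K = f"
    and "\<forall>f\<in>edges_of K - {e}. \<forall>f'\<in>edges_of K - {e}. f \<noteq> f' \<longrightarrow> fst (Tg f) \<inter> fst (Tg f') \<subseteq> K"
  shows "glued_branches K (edges_of K - {e}) (\<lambda>f. fst (Tg f)) Cf"
proof
  fix h assume h: "h \<in> edges_of K - {e}"
  have tight: "tight_twg r h (Tg h) (ord h) (Cf h)" using assms(2) h by blast
  show "h \<in> Cf h" by (rule tight_twg_graph(2)[OF tight assms(1)])
  show "Cf h \<subseteq> edges_of (fst (Tg h))" by (rule tight_twg_graph(4)[OF tight assms(1)])
  show "fst (Tg h) \<inter> K = h" using assms(3) h by blast
next
  fix h h' assume "h \<in> edges_of K - {e}" "h' \<in> edges_of K - {e}" "h \<noteq> h'"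
  then show "fst (Tg h) \<inter> fst (Tg h') \<subseteq> K" using assms(4) by blast
qed blast

lemma tight_twg_clique_closed:
  assumes "tight_twg r f T k C" and "5 \<le> r"
  shows "clique_closed r C"
  using assms(1)
proof (induction rule: tight_twg.induct)
  case (base e)
  show ?case using assms(2) by (intro clique_closed_singleton) simp
next
  case (step K e Tg ord Cf)
  interpret glued_branches K "edges_of K - {e}" "\<lambda>f. fst (Tg f)" Cf
    using assms(2) step.hyps(5,6) step.IH by (intro glued_branchesI[of r]) auto
  show ?case using clique_closed_cliques[OF assms(2)] step.IH by blast
qed

lemma tight_twg_cliques_least:
  assumes "tight_twg r f T k C" and "3 \<le> r" and closed: "clique_closed r D" and "snd T \<subseteq> D"
  shows "C \<subseteq> D"
  using assms(1,4)
proof (induction rule: tight_twg.induct)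
  case (step K e Tg ord Cf)
  let ?E = "edges_of K - {e}"
  have Cf_D: "Cf f \<subseteq> D" if "f \<in> ?E" for f
    using step.IH step.prems that by auto
  have "f \<in> D" if "f \<in> ?E" for f
    using Cf_D[OF that] tight_twg_graph(2)[OF _ assms(2)] step.IH that by blast
  moreover have "e \<in> edges_of K" using step.hyps(3,4) by (simp add: mem_edges_of)
  ultimately have "e \<in> D" using clique_closedD[OF closed step.hyps(1,2)] by blast
  with \<open>\<And>f. f \<in> ?E \<Longrightarrow> f \<in> D\<close> have "edges_of K \<subseteq> D" by blast
  then show ?case using Cf_D by blast
qed simp

lemma tight_twg_cliques_unique:
  assumes "tight_twg r f T k C" and "tight_twg r f' T k' C'" and "5 \<le> r"
  shows "C = C'"
proof -
  have "3 \<le> r" using assms(3) by simp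
  then show ?thesis
    using tight_twg_cliques_least[OF assms(1) _ tight_twg_clique_closed[OF assms(2,3)]]
      tight_twg_cliques_least[OF assms(2) _ tight_twg_clique_closed[OF assms(1,3)]]
      tight_twg_graph(3)[OF assms(1)] tight_twg_graph(3)[OF assms(2)]
    by blast
qed

lemma (in glued_branches) clique_within_branch:
  assumes X: "finite X" "3 \<le> card X" and g: "g \<in> E" and "edges_of X \<subseteq> cliques"
    and "X \<subseteq> K \<union> (\<Union>h\<in>E. Vs h)" and "X \<inter> K \<subseteq> g"
    and e: "e \<subseteq> X" "card e = 2" "e \<subseteq> Vs g"
  shows "X \<subseteq> Vs g"
proof -
  have g2: "card g = 2" using g branch_edges by (auto simp: mem_edges_of)
  obtain x where x: "x \<in> X" "x \<notin> K"
  proof (rule ccontr)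
    assume "\<not> thesis"
    then have "X \<subseteq> g" using that assms(6) by auto
    then have "card X \<le> card g" using g2 card.infinite[of g] by (intro card_mono) auto
    then show False using X(2) g2 by simp
  qed
  then obtain h where h: "h \<in> E" "x \<in> Vs h" using assms(5) by auto
  have X_h: "X \<subseteq> Vs h"
  proof
    fix y assume y: "y \<in> X"
    show "y \<in> Vs h"
    proof (cases "y = x")
      case False
      then have "{x, y} \<in> cliques" using doubleton_in_edges_of[OF x(1) y] assms(4) by auto
      then show ?thesis using clique_edge_stays_in_branch[OF h x(2)] by blast
    qed (use h in simp)
  qed
  have "h = g"
  proof (rule ccontr)
    assume "h \<noteq> g"
    then have "e \<subseteq> K" using X_h e(1,3) branches_meet_in_root[OF h(1) g] by blast
    then have "e \<subseteq> g" using e(1) assms(6) by blast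
    then have "e = g" using e(2) g2 by (rule card2_subset_eq)
    then have "g \<subseteq> h" using X_h e(1) \<open>e \<subseteq> K\<close> branch_meets_root[OF h(1)] by blast
    then have "g = h" using g2 h(1) branch_edges
      by (intro card2_subset_eq) (auto simp: mem_edges_of)
    with \<open>h \<noteq> g\<close> show False by simp
  qed
  then show ?thesis using X_h by simp
qed

lemma (in glued_branches) tight_twg_within_branch:
  assumes "tight_twg r p T k C" and "3 \<le> r" and g: "g \<in> E"
  shows "C \<subseteq> cliques \<Longrightarrow> p \<subseteq> Vs g \<Longrightarrow> fst T \<inter> K \<subseteq> g \<Longrightarrow> fst T \<subseteq> K \<union> (\<Union>h\<in>E. Vs h)
    \<Longrightarrow> fst T \<subseteq> Vs g"
  using assms(1)
proof (induction rule: tight_twg.induct)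
  case (step K' e Tg ord Cf')
  let ?E' = "edges_of K' - {e}"
  let ?V = "\<Union>f\<in>?E'. fst (Tg f)"
  have e: "e \<in> edges_of K'" using step.hyps(3,4) by (simp add: mem_edges_of)
  have tight: "tight_twg r f (Tg f) (ord f) (Cf' f)" if "f \<in> ?E'" for f
    using step.IH that by blast
  have "K' = \<Union>?E'" using Union_edges_of_Diff[OF _ e] step.hyps(2) assms(2) by simp
  then have K'_V: "K' \<subseteq> ?V"
    using twg_graph(2)[OF tight_twg_graph(1)[OF tight assms(2)] assms(2)] by blast
  have "edges_of K' \<subseteq> cliques" using step.prems(1) by simp
  moreover have "K' \<subseteq> K \<union> (\<Union>h\<in>E. Vs h)" "K' \<inter> K \<subseteq> g"
    using K'_V step.prems(3,4) by auto
  moreover have "3 \<le> card K'" using step.hyps(2) assms(2) by simp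
  ultimately have "K' \<subseteq> Vs g"
    using clique_within_branch[OF step.hyps(1) _ g] step.hyps(3,4) step.prems(2) by blast
  have "fst (Tg f) \<subseteq> Vs g" if f: "f \<in> ?E'" for f
  proof -
    have "Cf' f \<subseteq> cliques" using step.prems(1) f by auto
    moreover have "f \<subseteq> Vs g" using \<open>K' \<subseteq> Vs g\<close> f by (auto simp: mem_edges_of)
    moreover have "fst (Tg f) \<inter> K \<subseteq> g" "fst (Tg f) \<subseteq> K \<union> (\<Union>h\<in>E. Vs h)"
      using step.prems(3,4) f by auto
    ultimately show ?thesis using step.IH f by blast
  qed
  then show ?case by auto
qed simp

section \<open>Relabelling\<close>

definition map_graph :: "('a \<Rightarrow> 'b) \<Rightarrow> 'a set \<times> 'a set set \<Rightarrow> 'b set \<times> 'b set set" where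
  "map_graph \<pi> = map_prod (image \<pi>) (image (image \<pi>))"

lemma inj_on_map_graph: "inj_on \<pi> A \<Longrightarrow> inj_on (map_graph \<pi>) (Pow A \<times> Pow (Pow A))"
  unfolding map_graph_def by (intro map_prod_inj_on inj_on_image_Pow)

lemma twg_step_map_graph:
  assumes K: "finite K" "card K = r" "e \<subseteq> K" "card e = 2"
    and inj_V: "inj_on \<pi> (\<Union>f\<in>edges_of K - {e}. fst (Tg f))"
    and K_V: "K \<subseteq> (\<Union>f\<in>edges_of K - {e}. fst (Tg f))"
    and IH: "\<forall>f\<in>edges_of K - {e}. twg r (\<pi> ` f) (map_graph \<pi> (Tg f)) (ord f)"
    and disj: "\<forall>f\<in>edges_of K - {e}. \<forall>f'\<in>edges_of K - {e}. f \<noteq> f' \<longrightarrow> fst (Tg f) \<inter> fst (Tg f') \<subseteq> K"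
  shows "twg r (\<pi> ` e)
    (map_graph \<pi> (\<Union>f\<in>edges_of K - {e}. fst (Tg f), \<Union>f\<in>edges_of K - {e}. snd (Tg f)))
    (1 + (\<Sum>f\<in>edges_of K - {e}. ord f))"
proof -
  let ?E = "edges_of K - {e}"
  have inj_K: "inj_on \<pi> K" using inj_on_subset[OF inj_V K_V] .
  have inj_E: "inj_on (image \<pi>) ?E"
    using inj_on_image_Pow[OF inj_K] by (rule inj_on_subset) (auto simp: mem_edges_of)
  have E': "edges_of (\<pi> ` K) - {\<pi> ` e} = image \<pi> ` ?E"
    using edges_of_image[OF inj_K] K(3)
      inj_on_image_set_diff[OF inj_on_image_Pow[OF inj_K], of "edges_of K" "{e}"]
    by (auto simp: edges_of_def)
  define pre where "pre c = inv_into K \<pi> ` c" for c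
  have pre: "pre (\<pi> ` f) = f" if "f \<in> ?E" for f
    using that inj_K unfolding pre_def by (simp add: mem_edges_of)
  define Tg' where "Tg' c = map_graph \<pi> (Tg (pre c))" for c
  define ord' where "ord' c = ord (pre c)" for c
  have "twg r (\<pi> ` e) (\<Union>c\<in>image \<pi> ` ?E. fst (Tg' c), \<Union>c\<in>image \<pi> ` ?E. snd (Tg' c))
      (1 + (\<Sum>c\<in>image \<pi> ` ?E. ord' c))"
  proof (rule twg.step[where K = "\<pi> ` K" and e = "\<pi> ` e", unfolded E'])
    show "finite (\<pi> ` K)" "card (\<pi> ` K) = r" "\<pi> ` e \<subseteq> \<pi> ` K" "card (\<pi> ` e) = 2"
      using K card_image[OF inj_K] card_image[OF inj_on_subset[OF inj_K K(3)]] by auto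
    show "\<forall>c\<in>image \<pi> ` ?E. twg r c (Tg' c) (ord' c)"
      using IH pre unfolding Tg'_def ord'_def by auto
    show "\<forall>c\<in>image \<pi> ` ?E. \<forall>c'\<in>image \<pi> ` ?E. c \<noteq> c' \<longrightarrow> fst (Tg' c) \<inter> fst (Tg' c') \<subseteq> \<pi> ` K"
    proof (intro ballI impI)
      fix c c' assume "c \<in> image \<pi> ` ?E" "c' \<in> image \<pi> ` ?E" "c \<noteq> c'"
      then obtain f f' where f: "f \<in> ?E" "f' \<in> ?E" "f \<noteq> f'" "c = \<pi> ` f" "c' = \<pi> ` f'" by blast
      have "fst (Tg' c) \<inter> fst (Tg' c') = \<pi> ` fst (Tg f) \<inter> \<pi> ` fst (Tg f')"
        unfolding Tg'_def map_graph_def using pre f by simp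
      also have "\<dots> = \<pi> ` (fst (Tg f) \<inter> fst (Tg f'))"
        using inj_on_image_Int[OF inj_V UN_upper[OF f(1)] UN_upper[OF f(2)]] by simp
      also have "\<dots> \<subseteq> \<pi> ` K" using disj f by blast
      finally show "fst (Tg' c) \<inter> fst (Tg' c') \<subseteq> \<pi> ` K" .
    qed
  qed
  moreover have "(\<Sum>c\<in>image \<pi> ` ?E. ord' c) = (\<Sum>f\<in>?E. ord f)"
    using sum.reindex[OF inj_E, of ord'] pre unfolding ord'_def by simp
  moreover have "(\<Union>c\<in>image \<pi> ` ?E. fst (Tg' c)) = \<pi> ` (\<Union>f\<in>?E. fst (Tg f))"
    "(\<Union>c\<in>image \<pi> ` ?E. snd (Tg' c)) = image \<pi> ` (\<Union>f\<in>?E. snd (Tg f))"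
    unfolding Tg'_def map_graph_def using pre by (auto simp: image_UN)
  ultimately show ?thesis unfolding map_graph_def by simp
qed

lemma twg_map_graph:
  assumes "twg r f T k" and "3 \<le> r" and "inj_on \<pi> (fst T)"
  shows "twg r (\<pi> ` f) (map_graph \<pi> T) k"
  using assms(1,3)
proof (induction rule: twg.induct)
  case (base e)
  have "card (\<pi> ` e) = 2" using base card_image by fastforce
  then show ?case unfolding map_graph_def using twg.base by fastforce
next
  case (step K e Tg ord)
  let ?E = "edges_of K - {e}"
  have inj_V: "inj_on \<pi> (\<Union>f\<in>?E. fst (Tg f))" using step.prems by simp
  have e: "e \<in> edges_of K" using step.hyps(3,4) by (simp add: mem_edges_of)
  have "K = \<Union>?E" using Union_edges_of_Diff[OF _ e] step.hyps(2) assms(2) by simp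
  moreover have "f \<subseteq> fst (Tg f)" if "f \<in> ?E" for f
  proof -
    have "twg r f (Tg f) (ord f)" using step.IH that by blast
    then show ?thesis by (rule twg_graph(2)[OF _ assms(2)])
  qed
  ultimately have "K \<subseteq> (\<Union>f\<in>?E. fst (Tg f))" by blast
  moreover have "\<forall>f\<in>?E. twg r (\<pi> ` f) (map_graph \<pi> (Tg f)) (ord f)"
  proof
    fix f assume f: "f \<in> ?E"
    have "inj_on \<pi> (fst (Tg f))" using inj_on_subset[OF inj_V UN_upper[OF f]] .
    then show "twg r (\<pi> ` f) (map_graph \<pi> (Tg f)) (ord f)" using step.IH f by blast
  qed
  ultimately show ?case by (rule twg_step_map_graph[OF step.hyps(1-4) inj_V _ _ step.hyps(5)])
qed

lemma card_twg_le:
  fixes e V :: "'a set" and e' V' :: "'b set"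
  assumes "3 \<le> r" and e: "card e = 2" "e \<subseteq> V" "finite V" and e': "card e' = 2" "e' \<subseteq> V'" "finite V'"
    and "card V = card V'"
  shows "card {T. twg r e T q \<and> fst T = V} \<le> card {T. twg r e' T q \<and> fst T = V'}"
proof -
  have fin: "finite e" "finite e'" using e(1) e'(1) card.infinite by fastforce+
  obtain \<pi>1 where \<pi>1: "bij_betw \<pi>1 e e'" using finite_same_card_bij[OF fin] e(1) e'(1) by auto
  have "card (V - e) = card (V' - e')"
    using assms(8) e e' fin by (simp add: card_Diff_subset)
  then obtain \<pi>2 where \<pi>2: "bij_betw \<pi>2 (V - e) (V' - e')"
    using finite_same_card_bij[of "V - e" "V' - e'"] e(3) e'(3) by auto
  define \<pi> where "\<pi> x = (if x \<in> e then \<pi>1 x else \<pi>2 x)" for x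
  have \<pi>_e: "bij_betw \<pi> e e'" using \<pi>1
    by (rule bij_betw_cong[THEN iffD1, rotated]) (simp add: \<pi>_def)
  have "bij_betw \<pi> (e \<union> (V - e)) (e' \<union> (V' - e'))"
  proof (rule bij_betw_combine[OF \<pi>_e])
    show "bij_betw \<pi> (V - e) (V' - e')" using \<pi>2
      by (rule bij_betw_cong[THEN iffD1, rotated]) (simp add: \<pi>_def)
  qed blast
  moreover have "e \<union> (V - e) = V" "e' \<union> (V' - e') = V'" using e(2) e'(2) by blast+
  ultimately have \<pi>: "inj_on \<pi> V" "\<pi> ` V = V'" "\<pi> ` e = e'"
    using \<pi>_e unfolding bij_betw_def by simp_all
  let ?S = "{T. twg r e T q \<and> fst T = V}" and ?S' = "{T. twg r e' T q \<and> fst T = V'}"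
  have S_graphs: "?S \<subseteq> Pow V \<times> Pow (Pow V)"
  proof
    fix T assume "T \<in> ?S"
    then show "T \<in> Pow V \<times> Pow (Pow V)" using twg_in_Pow[of r e T q] assms(1) by simp
  qed
  show ?thesis
  proof (rule card_inj_on_le)
    show "inj_on (map_graph \<pi>) ?S" by (rule inj_on_subset[OF inj_on_map_graph[OF \<pi>(1)] S_graphs])
    show "map_graph \<pi> ` ?S \<subseteq> ?S'"
    proof
      fix T' assume "T' \<in> map_graph \<pi> ` ?S"
      then obtain T where T: "twg r e T q" "fst T = V" "T' = map_graph \<pi> T" by blast
      have "twg r (\<pi> ` e) (map_graph \<pi> T) q" using twg_map_graph[OF T(1) assms(1)] \<pi>(1) T(2) by simp
      then have "twg r e' T' q" using T(3) \<pi>(3) by simp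
      moreover have "fst T' = V'" using T(2,3) \<pi>(2) by (simp add: map_graph_def)
      ultimately show "T' \<in> ?S'" by simp
    qed
    show "finite ?S'" by (rule finite_subset[OF _ finite_twgs_within[OF assms(1) e'(3)]]) auto
  qed
qed

lemma card_twg_eq:
  fixes e V :: "'a set" and e' V' :: "'b set"
  assumes "3 \<le> r" and "card e = 2" "e \<subseteq> V" "finite V" and "card e' = 2" "e' \<subseteq> V'" "finite V'"
    and "card V = card V'"
  shows "card {T. twg r e T q \<and> fst T = V} = card {T. twg r e' T q \<and> fst T = V'}"
  using card_twg_le[where q = q, OF assms]
    card_twg_le[where q = q, OF assms(1,5-7,2-4) assms(8)[symmetric]]
  by (rule antisym)

text \<open>The number \<open>t(q)\<close> of the paper for vertex sets of size \<open>n\<close>; by \<open>card_twg_eq\<close> the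
  choice of the labelled edge and vertex set does not matter.\<close>

definition twg_count :: "nat \<Rightarrow> nat \<Rightarrow> nat \<Rightarrow> nat" where
  "twg_count r q n = card {T. twg r {0, 1} T q \<and> fst T = {0..<n :: nat}}"

lemma card_twg_eq_twg_count:
  assumes "3 \<le> r" and "card e = 2" and "e \<subseteq> V" and "finite V"
  shows "card {T. twg r e T q \<and> fst T = V} = twg_count r q (card V)"
proof -
  have "2 \<le> card V" using card_mono[OF assms(4,3)] assms(2) by simp
  then show ?thesis
    unfolding twg_count_def using assms by (intro card_twg_eq) auto
qed

section \<open>Gluing families of branches\<close>

definition glue :: "'a set set \<Rightarrow> ('a set \<Rightarrow> 'a set \<times> 'a set set) \<Rightarrow> 'a set \<times> 'a set set" where
  "glue E F = (\<Union>h\<in>E. fst (F h), \<Union>h\<in>E. snd (F h))"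

definition branch_families ::
  "nat \<Rightarrow> nat \<Rightarrow> nat \<Rightarrow> 'a set set \<Rightarrow> 'a set \<Rightarrow> ('a set \<Rightarrow> 'a set \<times> 'a set set) set" where
  "branch_families r q s E U = {F \<in> extensional E.
     (\<forall>h\<in>E. twg r h (F h) q \<and> fst (F h) - h \<subseteq> U \<and> card (fst (F h) - h) = s) \<and>
     (\<forall>h\<in>E. \<forall>h'\<in>E. h \<noteq> h' \<longrightarrow> (fst (F h) - h) \<inter> (fst (F h') - h') = {})}"

definition decompositions ::
  "nat \<Rightarrow> nat \<Rightarrow> 'a set \<Rightarrow> 'a set \<Rightarrow> ('a set \<times> ('a set \<Rightarrow> 'a set \<times> 'a set set)) set" where
  "decompositions r q e V = (SIGMA K:{K. K \<subseteq> V \<and> e \<subseteq> K \<and> card K = r}.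
     branch_families r q ((r - 2) * q) (edges_of K - {e}) (V - K))"

lemma finite_branch_families:
  assumes "3 \<le> r" and "finite E" and "finite U" and "\<forall>h\<in>E. finite h"
  shows "finite (branch_families r q s E U)"
proof -
  let ?W = "\<Union>E \<union> U"
  have "branch_families r q s E U \<subseteq> (\<Pi>\<^sub>E h\<in>E. {T. twg r h T q \<and> fst T \<subseteq> ?W})"
  proof
    fix F assume F: "F \<in> branch_families r q s E U"
    show "F \<in> (\<Pi>\<^sub>E h\<in>E. {T. twg r h T q \<and> fst T \<subseteq> ?W})"
      unfolding PiE_iff
    proof (intro conjI ballI)
      fix h assume h: "h \<in> E"
      then have "twg r h (F h) q" "fst (F h) - h \<subseteq> U" using F unfolding branch_families_def by auto
      then show "F h \<in> {T. twg r h T q \<and> fst T \<subseteq> ?W}" using h by auto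
    qed (use F in \<open>simp add: branch_families_def\<close>)
  qed
  moreover have "finite ?W" using assms(2-4) by blast
  then have "finite (\<Pi>\<^sub>E h\<in>E. {T. twg r h T q \<and> fst T \<subseteq> ?W})"
    using assms(2) by (intro finite_PiE finite_twgs_within[OF assms(1)]) auto
  ultimately show ?thesis by (rule finite_subset)
qed

lemma card_twg_private_part:
  assumes "3 \<le> r" and "finite U" and "card h = 2" and "h \<inter> U = {}"
  shows "card {T. twg r h T q \<and> fst T - h \<subseteq> U \<and> card (fst T - h) = s}
    = (card U choose s) * twg_count r q (s + 2)"
proof -
  let ?P = "{P. P \<subseteq> U \<and> card P = s}"
  let ?B = "\<lambda>P. {T. twg r h T q \<and> fst T = h \<union> P}"
  have fin_h: "finite h" using assms(3) card.infinite by fastforce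
  have "{T. twg r h T q \<and> fst T - h \<subseteq> U \<and> card (fst T - h) = s} = (\<Union>P\<in>?P. ?B P)"
  proof (intro equalityI subsetI)
    fix T assume "T \<in> {T. twg r h T q \<and> fst T - h \<subseteq> U \<and> card (fst T - h) = s}"
    moreover from this have "fst T = h \<union> (fst T - h)" using twg_graph(2)[OF _ assms(1)] by blast
    ultimately show "T \<in> (\<Union>P\<in>?P. ?B P)" by blast
  next
    fix T assume "T \<in> (\<Union>P\<in>?P. ?B P)"
    then obtain P where "P \<subseteq> U" "card P = s" "twg r h T q" "fst T = h \<union> P" by blast
    moreover from this have "fst T - h = P" using assms(4) by blast
    ultimately show "T \<in> {T. twg r h T q \<and> fst T - h \<subseteq> U \<and> card (fst T - h) = s}" by simp
  qed
  also have "card \<dots> = (\<Sum>P\<in>?P. card (?B P))"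
  proof (rule card_UN_disjoint)
    show "finite ?P" using assms(2) by simp
    have fin: "finite {T. twg r h T q \<and> fst T \<subseteq> h \<union> U}"
      using fin_h assms(2) by (intro finite_twgs_within[OF assms(1)]) simp
    show "\<forall>P\<in>?P. finite (?B P)"
    proof
      fix P assume "P \<in> ?P"
      then have "?B P \<subseteq> {T. twg r h T q \<and> fst T \<subseteq> h \<union> U}" by auto
      then show "finite (?B P)" using fin by (rule finite_subset)
    qed
    show "\<forall>P\<in>?P. \<forall>P'\<in>?P. P \<noteq> P' \<longrightarrow> ?B P \<inter> ?B P' = {}"
      using assms(4) by blast
  qed
  also have "\<dots> = (\<Sum>P\<in>?P. twg_count r q (s + 2))"
  proof (rule sum.cong)
    fix P assume P: "P \<in> ?P"
    then have "finite P" using assms(2) finite_subset by blast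
    then have "card (h \<union> P) = s + 2" using P assms(3,4) fin_h card_Un_disjoint[of h P] by auto
    then show "card (?B P) = twg_count r q (s + 2)"
      using card_twg_eq_twg_count[OF assms(1,3)] fin_h \<open>finite P\<close> by simp
  qed simp
  also have "\<dots> = (card U choose s) * twg_count r q (s + 2)" using n_subsets[OF assms(2)] by simp
  finally show ?thesis .
qed

lemma branch_families_remove:
  assumes "h0 \<notin> E" and F: "F \<in> branch_families r q s (insert h0 E) U"
  shows "F(h0 := undefined) \<in> branch_families r q s E (U - (fst (F h0) - h0))"
proof -
  from F have F_ext: "F \<in> extensional (insert h0 E)"
    and F_br: "\<And>h. h \<in> insert h0 E \<Longrightarrow> twg r h (F h) q \<and> fst (F h) - h \<subseteq> U \<and> card (fst (F h) - h) = s"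
    and F_disj: "\<And>h h'. h \<in> insert h0 E \<Longrightarrow> h' \<in> insert h0 E \<Longrightarrow> h \<noteq> h'
      \<Longrightarrow> (fst (F h) - h) \<inter> (fst (F h') - h') = {}"
    unfolding branch_families_def by blast+
  show ?thesis
    unfolding branch_families_def
  proof (intro CollectI conjI ballI impI)
    show "F(h0 := undefined) \<in> extensional E" using F_ext by simp
    fix h assume h: "h \<in> E"
    then have "h \<noteq> h0" using assms(1) by blast
    then show "twg r h ((F(h0 := undefined)) h) q"
      "fst ((F(h0 := undefined)) h) - h \<subseteq> U - (fst (F h0) - h0)"
      "card (fst ((F(h0 := undefined)) h) - h) = s"
      using F_br[of h] F_disj[of h h0] h by auto
    fix h' assume "h' \<in> E" "h \<noteq> h'"
    then show "(fst ((F(h0 := undefined)) h) - h) \<inter> (fst ((F(h0 := undefined)) h') - h') = {}"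
      using F_disj[of h h'] h assms(1) by auto
  qed
qed

lemma branch_families_extend:
  assumes "h0 \<notin> E" and T: "twg r h0 T q" "fst T - h0 \<subseteq> U" "card (fst T - h0) = s"
    and G: "G \<in> branch_families r q s E (U - (fst T - h0))"
  shows "G(h0 := T) \<in> branch_families r q s (insert h0 E) U"
proof -
  from G have G_ext: "G \<in> extensional E"
    and G_br: "\<And>h. h \<in> E \<Longrightarrow> twg r h (G h) q \<and> fst (G h) - h \<subseteq> U - (fst T - h0)
      \<and> card (fst (G h) - h) = s"
    and G_disj: "\<And>h h'. h \<in> E \<Longrightarrow> h' \<in> E \<Longrightarrow> h \<noteq> h' \<Longrightarrow> (fst (G h) - h) \<inter> (fst (G h') - h') = {}"
    unfolding branch_families_def by blast+
  show ?thesis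
    unfolding branch_families_def
  proof (intro CollectI conjI ballI impI)
    show "G(h0 := T) \<in> extensional (insert h0 E)" using G_ext by (intro extensional_insert) auto
    fix h assume h: "h \<in> insert h0 E"
    then show "twg r h ((G(h0 := T)) h) q" "fst ((G(h0 := T)) h) - h \<subseteq> U"
      "card (fst ((G(h0 := T)) h) - h) = s"
      using T G_br[of h] by auto
    fix h' assume "h' \<in> insert h0 E" "h \<noteq> h'"
    then show "(fst ((G(h0 := T)) h) - h) \<inter> (fst ((G(h0 := T)) h') - h') = {}"
      using h G_br[of h] G_br[of h'] G_disj[of h h'] assms(1) by auto
  qed
qed

lemma branch_families_insert:
  assumes "h0 \<notin> E"
  shows "bij_betw (\<lambda>F. (F h0, F(h0 := undefined))) (branch_families r q s (insert h0 E) U)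
    (SIGMA T:{T. twg r h0 T q \<and> fst T - h0 \<subseteq> U \<and> card (fst T - h0) = s}.
       branch_families r q s E (U - (fst T - h0)))"
proof (rule bij_betw_byWitness[where f' = "\<lambda>(T, G). G(h0 := T)"])
  let ?A = "{T. twg r h0 T q \<and> fst T - h0 \<subseteq> U \<and> card (fst T - h0) = s}"
  let ?S = "SIGMA T:?A. branch_families r q s E (U - (fst T - h0))"
  show "\<forall>F\<in>branch_families r q s (insert h0 E) U.
      (\<lambda>(T, G). G(h0 := T)) (F h0, F(h0 := undefined)) = F"
    by simp
  show "\<forall>TG\<in>?S. (\<lambda>F. (F h0, F(h0 := undefined))) ((\<lambda>(T, G). G(h0 := T)) TG) = TG"
  proof
    fix TG assume TG_mem: "TG \<in> ?S"
    obtain T G where TG: "TG = (T, G)" by (cases TG)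
    then have "G \<in> extensional E" using TG_mem unfolding branch_families_def by simp
    then have "G h0 = undefined" using assms by (rule extensional_arb)
    then show "(\<lambda>F. (F h0, F(h0 := undefined))) ((\<lambda>(T, G). G(h0 := T)) TG) = TG"
      unfolding TG by (simp add: fun_upd_idem)
  qed
  show "(\<lambda>F. (F h0, F(h0 := undefined))) ` branch_families r q s (insert h0 E) U \<subseteq> ?S"
  proof
    fix x assume "x \<in> (\<lambda>F. (F h0, F(h0 := undefined))) ` branch_families r q s (insert h0 E) U"
    then obtain F where F: "F \<in> branch_families r q s (insert h0 E) U"
      and x: "x = (F h0, F(h0 := undefined))" by blast
    have "F h0 \<in> ?A" using F unfolding branch_families_def by blast
    then show "x \<in> ?S" using branch_families_remove[OF assms F] x by simp
  qed
  show "(\<lambda>(T, G). G(h0 := T)) ` ?S \<subseteq> branch_families r q s (insert h0 E) U"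
  proof
    fix x assume "x \<in> (\<lambda>(T, G). G(h0 := T)) ` ?S"
    then obtain TG where TG: "TG \<in> ?S" and x: "x = (\<lambda>(T, G). G(h0 := T)) TG" by blast
    obtain T G where "TG = (T, G)" by (cases TG)
    then show "x \<in> branch_families r q s (insert h0 E) U"
      using branch_families_extend[OF assms, of r T q U s G] TG x by simp
  qed
qed

lemma prod_choose_Suc:
  "(\<Prod>i<Suc n. (N - i * s) choose s) = (N choose s) * (\<Prod>i<n. (N - s - i * s) choose s)"
  by (subst prod.lessThan_Suc_shift) (simp add: diff_diff_left)

lemma card_branch_families:
  assumes "3 \<le> r" and "finite E" and "finite U" and "\<forall>h\<in>E. card h = 2 \<and> h \<inter> U = {}"
  shows "card (branch_families r q s E U)
    = (\<Prod>i<card E. (card U - i * s) choose s) * twg_count r q (s + 2) ^ card E"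
  using assms(2-4)
proof (induction E arbitrary: U rule: finite_induct)
  case empty
  then show ?case by (simp add: branch_families_def)
next
  case (insert h0 E)
  let ?A = "{T. twg r h0 T q \<and> fst T - h0 \<subseteq> U \<and> card (fst T - h0) = s}"
  let ?t = "twg_count r q (s + 2)"
  let ?X = "(\<Prod>i<card E. (card U - s - i * s) choose s) * ?t ^ card E"
  have h0: "card h0 = 2" "h0 \<inter> U = {}" using insert.prems(2) by auto
  have fiber: "card (branch_families r q s E (U - (fst T - h0))) = ?X" if "T \<in> ?A" for T
  proof -
    have "fst T - h0 \<subseteq> U" "card (fst T - h0) = s" using that by simp_all
    then have "card (U - (fst T - h0)) = card U - s"
      using card_Diff_subset[OF finite_subset[OF _ insert.prems(1)]] by simp
    then show ?thesis using insert.IH[of "U - (fst T - h0)"] insert.prems by auto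
  qed
  have "card (branch_families r q s (insert h0 E) U)
      = card (SIGMA T:?A. branch_families r q s E (U - (fst T - h0)))"
    by (rule bij_betw_same_card[OF branch_families_insert[OF insert.hyps(2)]])
  also have "\<dots> = (\<Sum>T\<in>?A. card (branch_families r q s E (U - (fst T - h0))))"
  proof (rule card_SigmaI)
    have "finite {T. twg r h0 T q \<and> fst T \<subseteq> h0 \<union> U}"
      using h0(1) card.infinite[of h0] insert.prems(1)
        by (intro finite_twgs_within[OF assms(1)]) auto
    then show "finite ?A" by (rule finite_subset[rotated]) auto
    have "\<forall>h\<in>E. finite h"
    proof
      fix h assume "h \<in> E"
      then have "card h = 2" using insert.prems(2) by simp
      then show "finite h" by (intro card_ge_0_finite) simp
    qed
    then show "\<forall>T\<in>?A. finite (branch_families r q s E (U - (fst T - h0)))"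
      using insert.hyps(1) insert.prems(1) by (intro ballI finite_branch_families[OF assms(1)]) auto
  qed
  also have "\<dots> = card ?A * ?X" using fiber by simp
  also have "card ?A = (card U choose s) * ?t"
    by (rule card_twg_private_part[OF assms(1) insert.prems(1) h0])
  also have "(card U choose s) * ?t * ?X
      = (\<Prod>i<card (insert h0 E). (card U - i * s) choose s) * ?t ^ card (insert h0 E)"
    using insert.hyps by (simp del: prod.lessThan_Suc add: prod_choose_Suc)
  finally show ?case .
qed

lemma prod_choose_fact:
  "n * s \<le> N \<Longrightarrow> (\<Prod>i<n. (N - i * s) choose s) * fact s ^ n * fact (N - n * s) = (fact N :: nat)"
proof (induction n arbitrary: N)
  case (Suc n)
  have "(\<Prod>i<Suc n. (N - i * s) choose s) * fact s ^ Suc n * fact (N - Suc n * s)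
      = (N choose s) * fact s *
        ((\<Prod>i<n. (N - s - i * s) choose s) * fact s ^ n * fact (N - s - n * s))"
    unfolding prod_choose_Suc by (simp add: diff_diff_left algebra_simps)
  also have "\<dots> = (N choose s) * fact s * fact (N - s)" using Suc.IH[of "N - s"] Suc.prems by simp
  also have "\<dots> = fact N" using binomial_fact_lemma[of s N] Suc.prems by (simp add: algebra_simps)
  finally show ?case .
qed simp

lemma real_choose_mult_prod_choose:
  "real (((a + m * s) choose a) * ((\<Prod>i<m. (m * s - i * s) choose s) * t ^ m))
    = fact (a + m * s) / fact a * (real t / fact s) ^ m"
proof -
  have "fact a * fact (m * s) * ((a + m * s) choose a) = (fact (a + m * s) :: nat)"
    using binomial_fact_lemma[of a "a + m * s"] by simp
  then have "real (fact a * fact (m * s) * ((a + m * s) choose a)) = real (fact (a + m * s))"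
    by (rule arg_cong)
  then have "fact (a + m * s) / fact a = (fact (m * s) :: real) * real ((a + m * s) choose a)"
    by (simp add: field_simps)
  moreover have "(\<Prod>i<m. (m * s - i * s) choose s) * fact s ^ m = (fact (m * s) :: nat)"
    using prod_choose_fact[of m s "m * s"] by simp
  then have "real ((\<Prod>i<m. (m * s - i * s) choose s) * fact s ^ m) = real (fact (m * s))"
    by (rule arg_cong)
  then have "(fact (m * s) :: real) = real (\<Prod>i<m. (m * s - i * s) choose s) * fact s ^ m" by simp
  ultimately show ?thesis unfolding of_nat_mult of_nat_power of_nat_prod by (simp add: power_divide)
qed

lemma card_supsets_of_card:
  assumes "finite V" and "e \<subseteq> V" and "card e \<le> n"
  shows "card {K. K \<subseteq> V \<and> e \<subseteq> K \<and> card K = n} = (card V - card e) choose (n - card e)"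
proof -
  have fin_e: "finite e" using assms(1,2) by (rule finite_subset[rotated])
  have "bij_betw (\<lambda>K. K - e) {K. K \<subseteq> V \<and> e \<subseteq> K \<and> card K = n} {W. W \<subseteq> V - e \<and> card W = n - card e}"
  proof (rule bij_betw_byWitness[where f' = "\<lambda>W. W \<union> e"])
    show "(\<lambda>K. K - e) ` {K. K \<subseteq> V \<and> e \<subseteq> K \<and> card K = n} \<subseteq> {W. W \<subseteq> V - e \<and> card W = n - card e}"
      using fin_e by (auto simp: card_Diff_subset)
    show "(\<lambda>W. W \<union> e) ` {W. W \<subseteq> V - e \<and> card W = n - card e} \<subseteq> {K. K \<subseteq> V \<and> e \<subseteq> K \<and> card K = n}"
    proof clarify
      fix W assume W: "W \<subseteq> V - e" "card W = n - card e"
      then have "card (W \<union> e) = card W + card e"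
        using fin_e finite_subset[OF W(1)] assms(1) by (intro card_Un_disjoint) auto
      then show "W \<union> e \<subseteq> V \<and> e \<subseteq> W \<union> e \<and> card (W \<union> e) = n" using W assms(2,3) by auto
    qed
  qed auto
  then have "card {K. K \<subseteq> V \<and> e \<subseteq> K \<and> card K = n} = card {W. W \<subseteq> V - e \<and> card W = n - card e}"
    by (rule bij_betw_same_card)
  also have "\<dots> = (card V - card e) choose (n - card e)"
    using n_subsets[of "V - e"] assms(1,2) fin_e by (simp add: card_Diff_subset)
  finally show ?thesis .
qed

section \<open>Decompositions of balanced TWGs\<close>

context
  fixes r q k :: nat and e V :: "'a set"
  assumes r: "5 \<le> r" and k: "k = 1 + ((r choose 2) - 1) * q"
    and e: "card e = 2" "e \<subseteq> V" and V: "finite V" "card V = (r - 2) * k + 2"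
begin

lemma card_V_eq: "card V = r + ((r choose 2) - 1) * ((r - 2) * q)"
proof -
  have "r = (r - 2) + 2" using r by simp
  then obtain p where rp: "r = p + 2" by blast
  have "(r - 2) * (1 + m * q) + 2 = r + m * ((r - 2) * q)" for m
    unfolding rp by (simp add: algebra_simps)
  then show ?thesis unfolding V(2) k .
qed

lemma decomposition_branch_families:
  assumes "(K, F) \<in> decompositions r q e V"
  shows "F \<in> branch_families r q ((r - 2) * q) (edges_of K - {e}) (V - K)"
  using assms unfolding decompositions_def by blast

lemma decompositionD:
  assumes "(K, F) \<in> decompositions r q e V"
  shows "finite K" and "card K = r" and "e \<in> edges_of K" and "K \<subseteq> V"
    and "F \<in> extensional (edges_of K - {e})"
proof -
  have K: "K \<subseteq> V" "e \<subseteq> K" "card K = r" using assms unfolding decompositions_def by simp_all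
  show "finite K" using finite_subset[OF K(1) V(1)] .
  show "card K = r" "K \<subseteq> V" by (fact K(3), fact K(1))
  show "e \<in> edges_of K" using K(2) e(1) by (simp add: mem_edges_of)
  show "F \<in> extensional (edges_of K - {e})"
    using decomposition_branch_families[OF assms] unfolding branch_families_def by blast
qed

lemma decomposition_branch:
  assumes "(K, F) \<in> decompositions r q e V" and h: "h \<in> edges_of K - {e}"
  shows "twg r h (F h) q" and "h \<subseteq> fst (F h)" and "fst (F h) \<inter> K = h" and "fst (F h) \<subseteq> V"
    and "card (fst (F h) - h) = (r - 2) * q" and "card (fst (F h)) = (r - 2) * q + 2"
proof -
  have F: "twg r h (F h) q" "fst (F h) - h \<subseteq> V - K" "card (fst (F h) - h) = (r - 2) * q"
    using decomposition_branch_families[OF assms(1)] h unfolding branch_families_def by blast+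
  have hK: "h \<subseteq> K" "card h = 2" using h by (auto simp: mem_edges_of)
  have sub: "h \<subseteq> fst (F h)" and fin: "finite (fst (F h))" using twg_graph(1,2)[OF F(1)] r by auto
  show "twg r h (F h) q" "h \<subseteq> fst (F h)" "card (fst (F h) - h) = (r - 2) * q" by fact+
  show "fst (F h) \<inter> K = h" using F(2) sub hK(1) by blast
  show "fst (F h) \<subseteq> V" using F(2) sub hK(1) decompositionD(4)[OF assms(1)] by blast
  show "card (fst (F h)) = (r - 2) * q + 2"
    using F(3) hK(2) card_Diff_subset[OF finite_subset[OF sub fin] sub] card_mono[OF fin sub]
      by simp
qed

lemma decomposition_branches_meet_in_root:
  assumes "(K, F) \<in> decompositions r q e V"
    and "h \<in> edges_of K - {e}" and "h' \<in> edges_of K - {e}" and "h \<noteq> h'"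
  shows "fst (F h) \<inter> fst (F h') \<subseteq> K"
proof -
  have "(fst (F h) - h) \<inter> (fst (F h') - h') = {}"
    using decomposition_branch_families[OF assms(1)] assms(2-4) unfolding branch_families_def
      by blast
  moreover have "h \<subseteq> K" "h' \<subseteq> K" using assms(2,3) by (auto simp: mem_edges_of)
  ultimately show ?thesis by blast
qed

lemma glue_decomposition_vertices:
  assumes "(K, F) \<in> decompositions r q e V"
  shows "fst (glue (edges_of K - {e}) F) = V"
proof -
  let ?E = "edges_of K - {e}"
  note K = decompositionD[OF assms] and branch = decomposition_branch[OF assms]
  have "K = \<Union>?E" using Union_edges_of_Diff[OF _ K(3)] K(2) r by simp
  then have "K \<subseteq> (\<Union>h\<in>?E. fst (F h))" using branch(2) by blast
  moreover have "\<forall>h\<in>?E. finite (fst (F h))" using finite_subset[OF branch(4) V(1)] by blast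
  moreover have "\<forall>h\<in>?E. \<forall>h'\<in>?E. h \<noteq> h' \<longrightarrow> fst (F h) \<inter> fst (F h') \<subseteq> K"
    using decomposition_branches_meet_in_root[OF assms] by blast
  ultimately have "card (\<Union>h\<in>?E. fst (F h)) = card K + (\<Sum>h\<in>?E. card (fst (F h) - K))"
    using K(1) finite_edges_of[OF K(1)] by (intro card_UN_meeting_in) auto
  also have "(\<Sum>h\<in>?E. card (fst (F h) - K)) = (\<Sum>h\<in>?E. (r - 2) * q)"
  proof (rule sum.cong)
    fix h assume h: "h \<in> ?E"
    have "fst (F h) - K = fst (F h) - h" using branch(3)[OF h] by blast
    then show "card (fst (F h) - K) = (r - 2) * q" using branch(5)[OF h] by simp
  qed simp
  also have "card K + \<dots> = card V"
    using card_edges_of_Diff[OF K(1,3)] K(2) card_V_eq by simp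
  finally have "card (\<Union>h\<in>?E. fst (F h)) = card V" .
  moreover have "(\<Union>h\<in>?E. fst (F h)) \<subseteq> V" using branch(4) by blast
  ultimately show ?thesis unfolding glue_def using card_subset_eq[OF V(1)] by simp
qed

lemma glue_decomposition_btwg:
  assumes "(K, F) \<in> decompositions r q e V"
  shows "btwg r e (glue (edges_of K - {e}) F) k"
proof -
  note K = decompositionD[OF assms]
  let ?E = "edges_of K - {e}"
  have "k = 1 + (\<Sum>f\<in>?E. q)" using card_edges_of_Diff[OF K(1,3)] K(2) k by simp
  moreover have "\<forall>f\<in>?E. twg r f (F f) q" using decomposition_branch(1)[OF assms] by blast
  moreover have "\<forall>f\<in>?E. \<forall>f'\<in>?E. f \<noteq> f' \<longrightarrow> fst (F f) \<inter> fst (F f') \<subseteq> K"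
    using decomposition_branches_meet_in_root[OF assms] by blast
  moreover have "e \<subseteq> K" using K(3) by (simp add: mem_edges_of)
  ultimately show ?thesis
    unfolding btwg_def glue_def using K(1,2) e(1)
      by (intro exI[of _ K] exI[of _ F] exI[of _ q]) simp
qed

lemma decomposition_tight:
  assumes "(K, F) \<in> decompositions r q e V"
  obtains Cf where "glued_branches K (edges_of K - {e}) (\<lambda>h. fst (F h)) Cf"
    and "\<forall>h\<in>edges_of K - {e}. tight_twg r h (F h) q (Cf h)"
    and "tight_twg r e (glue (edges_of K - {e}) F) k (edges_of K \<union> (\<Union>h\<in>edges_of K - {e}. Cf h))"
proof -
  let ?E = "edges_of K - {e}"
  note K = decompositionD[OF assms] and branch = decomposition_branch[OF assms]
  have r3: "3 \<le> r" using r by simp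
  have "\<forall>h\<in>?E. \<exists>C. tight_twg r h (F h) q C"
    using twg_imp_tight_twg[OF branch(1) r3 branch(6)] by blast
  then obtain Cf where Cf: "\<forall>h\<in>?E. tight_twg r h (F h) q (Cf h)" by (metis bchoice)
  have meet: "\<forall>h\<in>?E. fst (F h) \<inter> K = h" using branch(3) by blast
  have disj: "\<forall>h\<in>?E. \<forall>h'\<in>?E. h \<noteq> h' \<longrightarrow> fst (F h) \<inter> fst (F h') \<subseteq> K"
    using decomposition_branches_meet_in_root[OF assms] by blast
  have "e \<subseteq> K" using K(3) by (simp add: mem_edges_of)
  then have "tight_twg r e (glue ?E F) (1 + (\<Sum>h\<in>?E. q)) (edges_of K \<union> (\<Union>h\<in>?E. Cf h))"
    unfolding glue_def using tight_twg.step[OF K(1,2) _ e(1) Cf meet disj] by simp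
  moreover have "1 + (\<Sum>h\<in>?E. q) = k" using card_edges_of_Diff[OF K(1,3)] K(2) k by simp
  ultimately show ?thesis using that glued_branchesI[OF r3 Cf meet disj] Cf by simp
qed

lemma decomposition_branch_edges:
  assumes "(K, F) \<in> decompositions r q e V" and g: "g \<in> edges_of K - {e}"
  shows "snd (F g) = {c \<in> snd (glue (edges_of K - {e}) F). c \<subseteq> fst (F g)}"
proof
  let ?E = "edges_of K - {e}"
  note branch = decomposition_branch[OF assms(1)]
  have edges: "snd (F h) \<subseteq> edges_of (fst (F h))" if "h \<in> ?E" for h
    using twg_graph(3)[OF branch(1)[OF that]] r by simp
  show "snd (F g) \<subseteq> {c \<in> snd (glue ?E F). c \<subseteq> fst (F g)}"
    using subset_edges_ofD[OF edges[OF g]] g unfolding glue_def by auto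
  show "{c \<in> snd (glue ?E F). c \<subseteq> fst (F g)} \<subseteq> snd (F g)"
  proof
    fix c assume c: "c \<in> {c \<in> snd (glue ?E F). c \<subseteq> fst (F g)}"
    then obtain h where h: "h \<in> ?E" "c \<in> snd (F h)" unfolding glue_def by auto
    show "c \<in> snd (F g)"
    proof (cases "h = g")
      case False
      have "c \<in> edges_of (fst (F h))" using edges[OF h(1)] h(2) by blast
      then have "c \<subseteq> fst (F h)" "card c = 2" by (auto simp: mem_edges_of)
      then have "c \<subseteq> K" using c decomposition_branches_meet_in_root[OF assms(1) g h(1)] False
        by blast
      then have "c \<subseteq> g" "c \<subseteq> h" using c \<open>c \<subseteq> fst (F h)\<close> branch(3)[OF g] branch(3)[OF h(1)] by blast+
      then have "c = g" "c = h" using \<open>card c = 2\<close> g h(1) card2_subset_eq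
        by (auto simp: mem_edges_of)
      with False show ?thesis by simp
    qed (use h in simp)
  qed
qed

lemma decomposition_root_unique:
  assumes A: "(K, F) \<in> decompositions r q e V" and B: "(K', F') \<in> decompositions r q e V"
    and eq: "glue (edges_of K - {e}) F = glue (edges_of K' - {e}) F'"
  shows "K' \<subseteq> K"
proof
  let ?E = "edges_of K - {e}"
  obtain Cf where "glued_branches K ?E (\<lambda>h. fst (F h)) Cf"
    and tight: "tight_twg r e (glue ?E F) k (edges_of K \<union> (\<Union>h\<in>?E. Cf h))"
    using decomposition_tight[OF A] .
  then interpret glued_branches K ?E "\<lambda>h. fst (F h)" Cf by simp
  obtain Cf' where "tight_twg r e (glue (edges_of K' - {e}) F') k
      (edges_of K' \<union> (\<Union>h\<in>edges_of K' - {e}. Cf' h))"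
    using decomposition_tight[OF B] .
  then have "edges_of K' \<subseteq> cliques"
    using tight_twg_cliques_unique[OF tight _ r] eq by (metis Un_upper1)
  fix x assume x: "x \<in> K'"
  show "x \<in> K"
  proof (rule ccontr)
    assume xK: "x \<notin> K"
    have "x \<in> V" using x decompositionD(4)[OF B] by blast
    then obtain h where h: "h \<in> ?E" "x \<in> fst (F h)"
      using glue_decomposition_vertices[OF A] unfolding glue_def by auto
    have "K' \<subseteq> fst (F h)"
    proof
      fix y assume y: "y \<in> K'"
      show "y \<in> fst (F h)"
      proof (cases "y = x")
        case False
        then have "{x, y} \<in> cliques" using doubleton_in_edges_of[OF x y] \<open>edges_of K' \<subseteq> cliques\<close>
          by blast
        then show ?thesis using clique_edge_stays_in_branch[OF h xK] by blast
      qed (use h in simp)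
    qed
    then have "e \<subseteq> h"
      using decompositionD(3)[OF A] decompositionD(3)[OF B] branch_meets_root[OF h(1)]
      by (auto simp: mem_edges_of)
    then have "e = h" using e(1) h(1) by (intro card2_subset_eq) (auto simp: mem_edges_of)
    with h(1) show False by simp
  qed
qed

lemma decomposition_branch_vertices_mono:
  assumes A: "(K, F) \<in> decompositions r q e V" and B: "(K, F') \<in> decompositions r q e V"
    and eq: "glue (edges_of K - {e}) F = glue (edges_of K - {e}) F'" and g: "g \<in> edges_of K - {e}"
  shows "fst (F' g) \<subseteq> fst (F g)"
proof -
  let ?E = "edges_of K - {e}"
  obtain Cf where "glued_branches K ?E (\<lambda>h. fst (F h)) Cf"
    and tight: "tight_twg r e (glue ?E F) k (edges_of K \<union> (\<Union>h\<in>?E. Cf h))"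
    using decomposition_tight[OF A] .
  then interpret glued_branches K ?E "\<lambda>h. fst (F h)" Cf by simp
  obtain Cf' where Cf': "\<forall>h\<in>?E. tight_twg r h (F' h) q (Cf' h)"
    and tight': "tight_twg r e (glue ?E F') k (edges_of K \<union> (\<Union>h\<in>?E. Cf' h))"
    using decomposition_tight[OF B] .
  have "cliques = edges_of K \<union> (\<Union>h\<in>?E. Cf' h)"
    using tight_twg_cliques_unique[OF tight _ r] tight' eq by simp
  then have "Cf' g \<subseteq> cliques" using g by blast
  moreover have "g \<subseteq> fst (F g)" by (rule decomposition_branch(2)[OF A g])
  moreover have "fst (F' g) \<inter> K \<subseteq> g" using decomposition_branch(3)[OF B g] by simp
  moreover have "fst (F' g) \<subseteq> K \<union> (\<Union>h\<in>?E. fst (F h))"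
    using decomposition_branch(4)[OF B g] glue_decomposition_vertices[OF A] unfolding glue_def
      by auto
  moreover have "3 \<le> r" using r by simp
  ultimately show ?thesis using tight_twg_within_branch[OF Cf'[rule_format, OF g] _ g] by blast
qed

lemma inj_on_glue_decompositions:
  "inj_on (\<lambda>(K, F). glue (edges_of K - {e}) F) (decompositions r q e V)"
proof (rule inj_onI)
  fix x y assume x: "x \<in> decompositions r q e V" and y: "y \<in> decompositions r q e V"
    and eq: "(\<lambda>(K, F). glue (edges_of K - {e}) F) x = (\<lambda>(K, F). glue (edges_of K - {e}) F) y"
  obtain K F K' F' where xy: "x = (K, F)" "y = (K', F')" by fastforce
  have A: "(K, F) \<in> decompositions r q e V" and B: "(K', F') \<in> decompositions r q e V"
    and eq: "glue (edges_of K - {e}) F = glue (edges_of K' - {e}) F'"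
    using x y eq unfolding xy by simp_all
  have "K' = K"
    using decomposition_root_unique[OF A B eq] decomposition_root_unique[OF B A eq[symmetric]]
    by blast
  note B = B[unfolded \<open>K' = K\<close>] and eq = eq[unfolded \<open>K' = K\<close>]
  have "F g = F' g" if g: "g \<in> edges_of K - {e}" for g
  proof (rule prod_eqI)
    show "fst (F g) = fst (F' g)"
      using decomposition_branch_vertices_mono[OF A B eq g]
        decomposition_branch_vertices_mono[OF B A eq[symmetric] g]
      by blast
    then show "snd (F g) = snd (F' g)"
      using decomposition_branch_edges[OF A g] decomposition_branch_edges[OF B g] eq by simp
  qed
  then have "F = F'" using decompositionD(5)[OF A] decompositionD(5)[OF B]
    by (intro extensionalityI)
  then show "x = y" using xy \<open>K' = K\<close> by simp
qed

lemma btwg_decomposition: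
  assumes "btwg r e T k" and "fst T = V"
  shows "T \<in> (\<lambda>(K, F). glue (edges_of K - {e}) F) ` decompositions r q e V"
proof -
  obtain K Tg j where K: "finite K" "card K = r" "e \<subseteq> K"
    and br: "\<forall>f\<in>edges_of K - {e}. twg r f (Tg f) j"
    and disj: "\<forall>f\<in>edges_of K - {e}. \<forall>f'\<in>edges_of K - {e}. f \<noteq> f' \<longrightarrow> fst (Tg f) \<inter> fst (Tg f') \<subseteq> K"
    and T: "T = (\<Union>f\<in>edges_of K - {e}. fst (Tg f), \<Union>f\<in>edges_of K - {e}. snd (Tg f))"
    and kj: "k = 1 + (\<Sum>f\<in>edges_of K - {e}. j)"
    using assms(1) unfolding btwg_def by blast
  let ?E = "edges_of K - {e}"
  have r3: "3 \<le> r" using r by simp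
  have eK: "e \<in> edges_of K" using K(3) e(1) by (simp add: mem_edges_of)
  have "((r choose 2) - 1) * j = ((r choose 2) - 1) * q"
    using kj k card_edges_of_Diff[OF K(1) eK] K(2) by auto
  moreover have "0 < (r choose 2) - 1" using le_choose_two[of r] r by simp
  ultimately have jq: "j = q" by simp
  have br_twg: "twg r f (Tg f) q" if "f \<in> ?E" for f using br that jq by blast
  have br_graph: "\<forall>f\<in>?E. finite (fst (Tg f)) \<and> f \<subseteq> fst (Tg f) \<and> card (fst (Tg f)) \<le> (r - 2) * q + 2"
    using twg_graph(1,2,4)[OF br_twg r3] by blast
  have "card (\<Union>f\<in>?E. fst (Tg f)) = (r - 2) * (1 + (\<Sum>f\<in>?E. q)) + 2"
    using assms(2) V(2) kj jq T by simp
  then have tight: "\<forall>f\<in>?E. fst (Tg f) \<inter> K = f \<and> card (fst (Tg f)) = (r - 2) * q + 2"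
    using card_glued_branches(2)[OF K(1,2) r3 eK br_graph disj] by blast
  have V_eq: "V = (\<Union>f\<in>?E. fst (Tg f))" using assms(2) T by simp
  have "K = \<Union>?E" using Union_edges_of_Diff[OF _ eK] K(2) r3 by simp
  then have "K \<subseteq> V" unfolding V_eq using br_graph by blast
  define F where "F = restrict Tg ?E"
  have "F \<in> branch_families r q ((r - 2) * q) ?E (V - K)"
    unfolding branch_families_def
  proof (intro CollectI conjI ballI impI)
    show "F \<in> extensional ?E" unfolding F_def by simp
    fix h assume h: "h \<in> ?E"
    have h2: "card h = 2" using h by (simp add: mem_edges_of)
    show "twg r h (F h) q" using br_twg[OF h] h unfolding F_def by simp
    show "fst (F h) - h \<subseteq> V - K" using tight h unfolding V_eq F_def by auto
    have Th: "finite (fst (Tg h))" "h \<subseteq> fst (Tg h)" "card (fst (Tg h)) = (r - 2) * q + 2"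
      using tight br_graph h by blast+
    then show "card (fst (F h) - h) = (r - 2) * q"
      using h h2 card_Diff_subset[OF finite_subset[OF Th(2,1)] Th(2)] unfolding F_def by simp
    fix h' assume h': "h' \<in> ?E" "h \<noteq> h'"
    have "fst (Tg h) \<inter> fst (Tg h') \<subseteq> K" "fst (Tg h) \<inter> K = h"
      using disj tight h h' by blast+
    then show "(fst (F h) - h) \<inter> (fst (F h') - h') = {}"
      using h h'(1) unfolding F_def by auto
  qed
  then have "(K, F) \<in> decompositions r q e V" unfolding decompositions_def using K \<open>K \<subseteq> V\<close> by simp
  moreover have "T = glue ?E F" unfolding T glue_def F_def by simp
  ultimately show ?thesis by force
qed

lemma bij_betw_glue_decompositions:
  "bij_betw (\<lambda>(K, F). glue (edges_of K - {e}) F) (decompositions r q e V)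
    {T. btwg r e T k \<and> fst T = V}"
  unfolding bij_betw_def
proof
  show "(\<lambda>(K, F). glue (edges_of K - {e}) F) ` decompositions r q e V
    = {T. btwg r e T k \<and> fst T = V}"
    using glue_decomposition_btwg glue_decomposition_vertices btwg_decomposition by auto
qed (rule inj_on_glue_decompositions)

lemma card_decompositions:
  "real (card (decompositions r q e V)) = fact ((r - 2) * k) / fact (r - 2) *
     (real (twg_count r q ((r - 2) * q + 2)) / fact ((r - 2) * q)) ^ ((r choose 2) - 1)"
proof -
  define m s N t where "m = (r choose 2) - 1" and "s = (r - 2) * q" and "N = (r - 2) * k"
    and "t = twg_count r q ((r - 2) * q + 2)"
  define P where "P = (\<Prod>i<m. (m * s - i * s) choose s)"
  let ?Ks = "{K. K \<subseteq> V \<and> e \<subseteq> K \<and> card K = r}"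
  have r3: "3 \<le> r" using r by simp
  have fiber: "finite (branch_families r q s (edges_of K - {e}) (V - K))"
    "card (branch_families r q s (edges_of K - {e}) (V - K)) = P * t ^ m" if "K \<in> ?Ks" for K
  proof -
    have K: "K \<subseteq> V" "e \<subseteq> K" "card K = r" using that by auto
    have fK: "finite K" using finite_subset[OF K(1) V(1)] .
    have eK: "e \<in> edges_of K" using K(2) e(1) by (simp add: mem_edges_of)
    have E: "finite (edges_of K - {e})" "\<forall>h\<in>edges_of K - {e}. card h = 2 \<and> h \<inter> (V - K) = {}"
      using finite_edges_of[OF fK] by (auto simp: mem_edges_of)
    have "\<forall>h\<in>edges_of K - {e}. finite h" by (auto simp: mem_edges_of intro: card_ge_0_finite)
    then show "finite (branch_families r q s (edges_of K - {e}) (V - K))"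
      using finite_branch_families[OF r3 E(1)] V(1) by simp
    have "card (edges_of K - {e}) = m" using card_edges_of_Diff[OF fK eK] K(3) m_def by simp
    moreover have "card (V - K) = m * s"
      using card_Diff_subset[OF fK K(1)] card_V_eq K(3) unfolding m_def s_def by simp
    ultimately show "card (branch_families r q s (edges_of K - {e}) (V - K)) = P * t ^ m"
      using card_branch_families[OF r3 E(1) _ E(2)] V(1) unfolding P_def t_def s_def by simp
  qed
  have "card (decompositions r q e V)
      = (\<Sum>K\<in>?Ks. card (branch_families r q s (edges_of K - {e}) (V - K)))"
    unfolding decompositions_def s_def[symmetric] using fiber(1) V(1) by (intro card_SigmaI) auto
  also have "\<dots> = card ?Ks * (P * t ^ m)" using fiber(2) by simp
  also have "card ?Ks = N choose (r - 2)"
    using card_supsets_of_card[OF V(1) e(2), of r] e(1) r V(2) unfolding N_def by simp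
  finally have card_eq: "card (decompositions r q e V) = (N choose (r - 2)) * (P * t ^ m)" .
  have N: "N = (r - 2) + m * s" using card_V_eq V(2) r unfolding N_def m_def s_def by simp
  have "real (card (decompositions r q e V))
      = real (((r - 2 + m * s) choose (r - 2)) * (P * t ^ m))"
    using card_eq N by simp
  also have "\<dots> = fact (r - 2 + m * s) / fact (r - 2) * (real t / fact s) ^ m"
    unfolding P_def by (rule real_choose_mult_prod_choose)
  finally show ?thesis using N unfolding N_def m_def s_def t_def by simp
qed

end

theorem lemma3p11:
  fixes r k q :: nat and e V :: "'a set"
  assumes "r \<ge> 5" and "k \<ge> 1"
    and "(r choose 2) - 1 dvd k - 1"
    and "q = (k - 1) div ((r choose 2) - 1)"
    and "card e = 2" and "e \<subseteq> V" and "finite V" and "card V = (r - 2) * k + 2"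
  shows "\<forall>e' V' :: 'a set. card e' = 2 \<longrightarrow> e' \<subseteq> V' \<longrightarrow> finite V' \<longrightarrow>
            card V' = (r - 2) * q + 2 \<longrightarrow>
     real (card {T. btwg r e T k \<and> fst T = V}) =
       fact ((r - 2) * k) / fact (r - 2) *
       (real (card {T. twg r e' T q \<and> fst T = V'}) / fact ((r - 2) * q)) ^ ((r choose 2) - 1)"
proof (intro allI impI)
  fix e' V' :: "'a set"
  assume e': "card e' = 2" "e' \<subseteq> V'" "finite V'" "card V' = (r - 2) * q + 2"
  have "k - 1 = ((r choose 2) - 1) * q" using assms(3,4) by simp
  then have k: "k = 1 + ((r choose 2) - 1) * q" using assms(2) by simp
  note setting = assms(1) k assms(5-8)
  have "card {T. btwg r e T k \<and> fst T = V} = card (decompositions r q e V)"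
    using bij_betw_same_card[OF bij_betw_glue_decompositions[OF setting]] by simp
  moreover have "card {T. twg r e' T q \<and> fst T = V'} = twg_count r q ((r - 2) * q + 2)"
    using card_twg_eq_twg_count[OF _ e'(1-3)] e'(4) assms(1) by simp
  ultimately show "real (card {T. btwg r e T k \<and> fst T = V}) = fact ((r - 2) * k) / fact (r - 2) *
      (real (card {T. twg r e' T q \<and> fst T = V'}) / fact ((r - 2) * q)) ^ ((r choose 2) - 1)"
    using card_decompositions[OF setting] by simp
qed

end
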